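(* Let $m\ge 1$, $n=3m+1$, and $t\ge 1$. Let $X_t=G_{n,t}\setminus N[a_t]$. Then $I(X_t)\simeq S^{2tm-1}$.
   Context: For a finite simple graph $G$, $I(G)$ is its independence complex (simplicial complex on $V(G)$ whose simplices are the independent sets); $N[v]$ is the closed neighbourhood of $v$ and $G\setminus S$ the induced subgraph on $V(G)\setminus S$. For integers $n\ge 2$, $t\ge 0$, the graph $G_{n,t}$ has vertex set $\{a_0,\dots,a_t\}\cup\{b_{i,j},c_{i,j}: 1\le i\le t,\ 1\le j\le n-1\}$, and its edges are exactly: $b_{i,j}\sim b_{i,j+1}$ and $c_{i,j}\sim c_{i,j+1}$ for $1\le i\le t$, $1\le j\le n-2$; $b_{i,n-1}\sim b_{i+1,1}$ and $c_{i,n-1}\sim c_{i+1,1}$ for $1\le i\le t-1$; and $a_{i-1}\sim b_{i,1}$, $a_{i-1}\sim c_{i,1}$, $a_i\sim b_{i,n-1}$, $a_i\sim c_{i,n-1}$ for $1\le i\le t$. (It is the line graph of a row of $t$ $(2n)$-gons.) *)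

theory Defs
  imports "HOL-Analysis.Analysis"
begin

datatype vtx = A nat | B nat nat | C nat nat

definition Gverts :: "nat \<Rightarrow> nat \<Rightarrow> vtx set" where
  "Gverts n t = {A i | i. i \<le> t}
     \<union> {B i j | i j. 1 \<le> i \<and> i \<le> t \<and> 1 \<le> j \<and> j \<le> n - 1}
     \<union> {C i j | i j. 1 \<le> i \<and> i \<le> t \<and> 1 \<le> j \<and> j \<le> n - 1}"

definition Gedge0 :: "nat \<Rightarrow> nat \<Rightarrow> vtx \<Rightarrow> vtx \<Rightarrow> bool" where
  "Gedge0 n t u v \<longleftrightarrow>
     (\<exists>i j. 1 \<le> i \<and> i \<le> t \<and> 1 \<le> j \<and> j \<le> n - 2 \<and>
        ((u = B i j \<and> v = B i (j+1)) \<or> (u = C i j \<and> v = C i (j+1))))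
   \<or> (\<exists>i. 1 \<le> i \<and> i \<le> t - 1 \<and>
        ((u = B i (n-1) \<and> v = B (i+1) 1) \<or> (u = C i (n-1) \<and> v = C (i+1) 1)))
   \<or> (\<exists>i. 1 \<le> i \<and> i \<le> t \<and>
        ((u = A (i-1) \<and> v = B i 1) \<or> (u = A (i-1) \<and> v = C i 1) \<or>
         (u = A i \<and> v = B i (n-1)) \<or> (u = A i \<and> v = C i (n-1))))"

definition Gadj :: "nat \<Rightarrow> nat \<Rightarrow> vtx \<Rightarrow> vtx \<Rightarrow> bool" where
  "Gadj n t u v \<longleftrightarrow> Gedge0 n t u v \<or> Gedge0 n t v u"

definition closed_nbhd :: "'a set \<Rightarrow> ('a \<Rightarrow> 'a \<Rightarrow> bool) \<Rightarrow> 'a \<Rightarrow> 'a set" where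
  "closed_nbhd V E v = {v} \<union> {u \<in> V. E v u}"

text \<open>For an induced subgraph on W \<subseteq> V with the
  restricted edge relation, this is just indep_complex W E.\<close>
definition indep_complex :: "'a set \<Rightarrow> ('a \<Rightarrow> 'a \<Rightarrow> bool) \<Rightarrow> 'a set set" where
  "indep_complex V E = {S. S \<subseteq> V \<and> (\<forall>u\<in>S. \<forall>v\<in>S. \<not> E u v)}"

text \<open>For a finite vertex set this is the standard realization.\<close>
definition geom_realization :: "'a set set \<Rightarrow> ('a \<Rightarrow> real) topology" where
  "geom_realization K = subtopology (powertop_real UNIV)
     {x. (\<forall>v. 0 \<le> x v) \<and> finite {v. x v \<noteq> 0} \<and> {v. x v \<noteq> 0} \<in> K
         \<and> sum x {v. x v \<noteq> 0} = 1}"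

end

theory Submission
  imports Defs
begin

(* The rows b and c of G_{3m+1,t} are two paths, and a_i is attached to positions 3mi and
   3mi + 1 of both; removing N[a_t] leaves the positions 1, ..., 3tm - 1 and a_0, ..., a_{t-1}.
   Deleting a vertex w whose neighbourhood contains that of another vertex (a fold) does not
   change the homotopy type of the independence complex.  Working down the paths, the vertex
   at each multiple 3q of 3 is dominated by the one at 3q + 2, whose other neighbour 3q + 3 is
   already gone; afterwards a_i is dominated by the b-vertex at 3mi + 2.  What is left is a
   perfect matching on the 2tm edges {3q + 1, 3q + 2}, whose independence complex is the
   boundary of the 2tm-dimensional cross-polytope, i.e. a (2tm - 1)-sphere. *)

abbreviation indep_space :: "'a set \<Rightarrow> ('a \<Rightarrow> 'a \<Rightarrow> bool) \<Rightarrow> ('a \<Rightarrow> real) topology" where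
  "indep_space V E \<equiv> geom_realization (indep_complex V E)"

lemma continuous_map_geom_realization_coordinate:
  "continuous_map (geom_realization K) euclideanreal (\<lambda>x. x v)"
  unfolding geom_realization_def
  by (rule continuous_map_from_subtopology[OF continuous_map_product_projection]) simp

lemma continuous_map_into_geom_realization:
  assumes "\<And>v. continuous_map X euclideanreal (\<lambda>x. f x v)"
    and "f ` topspace X \<subseteq> topspace (geom_realization K)"
  shows "continuous_map X (geom_realization K) f"
  using assms unfolding geom_realization_def continuous_map_in_subtopology
  by (auto simp: continuous_map_componentwise_UNIV)

lemma topspace_indep_space:
  assumes "finite V"
  shows "x \<in> topspace (indep_space V E) \<longleftrightarrow>
    (\<forall>v. 0 \<le> x v) \<and> {v. x v \<noteq> 0} \<subseteq> V \<and> (\<forall>u v. x u \<noteq> 0 \<longrightarrow> x v \<noteq> 0 \<longrightarrow> \<not> E u v)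
      \<and> sum x V = 1"
proof -
  have "sum x {v. x v \<noteq> 0} = sum x V" if "{v. x v \<noteq> 0} \<subseteq> V"
    using assms that by (intro sum.mono_neutral_left) auto
  then show ?thesis
    using assms by (auto simp: geom_realization_def indep_complex_def intro: finite_subset)
qed

lemma in_indep_spaceI:
  assumes "finite V" and "\<And>v. 0 \<le> x v" and "\<And>v. x v \<noteq> 0 \<Longrightarrow> v \<in> S" and "S \<subseteq> V"
    and "\<And>u v. u \<in> S \<Longrightarrow> v \<in> S \<Longrightarrow> \<not> E u v" and "sum x V = 1"
  shows "x \<in> topspace (indep_space V E)"
  using assms by (auto simp: topspace_indep_space)

section \<open>Folds\<close>

definition push_forward :: "('a \<Rightarrow> 'b) \<Rightarrow> 'a set \<Rightarrow> ('a \<Rightarrow> real) \<Rightarrow> 'b \<Rightarrow> real" where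
  "push_forward r V x v = (\<Sum>w | w \<in> V \<and> r w = v. x w)"

lemma push_forward_nonzero:
  "push_forward r V x v \<noteq> 0 \<Longrightarrow> v \<in> r ` {w. x w \<noteq> 0}"
  unfolding push_forward_def by (auto dest: sum.not_neutral_contains_not_neutral)

lemma continuous_map_push_forward:
  assumes "finite V"
  shows "continuous_map (geom_realization K) euclideanreal (\<lambda>x. push_forward r V x v)"
  unfolding push_forward_def using assms
  by (intro continuous_map_sum continuous_map_geom_realization_coordinate) auto

lemma push_forward_in_indep_space:
  assumes "finite V" "finite V'" and "r ` V \<subseteq> V'"
    and simplicial: "\<And>u v. u \<in> V \<Longrightarrow> v \<in> V \<Longrightarrow> \<not> E u v \<Longrightarrow> \<not> E' (r u) (r v)"
    and x: "x \<in> topspace (indep_space V E)"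
  shows "push_forward r V x \<in> topspace (indep_space V' E')"
proof -
  have x': "\<forall>v. 0 \<le> x v" "{v. x v \<noteq> 0} \<subseteq> V" "\<forall>u v. x u \<noteq> 0 \<longrightarrow> x v \<noteq> 0 \<longrightarrow> \<not> E u v"
    "sum x V = 1"
    using x assms(1) by (auto simp: topspace_indep_space)
  have "sum (push_forward r V x) V' = sum x V"
    unfolding push_forward_def using sum.group[OF assms(1,2,3), of x] by simp
  moreover have "r ` {v. x v \<noteq> 0} \<subseteq> V'"
    using x'(2) assms(3) by blast
  moreover have "\<not> E' u v" if "u \<in> r ` {v. x v \<noteq> 0}" "v \<in> r ` {v. x v \<noteq> 0}" for u v
    using that x'(2,3) simplicial by blast
  ultimately show ?thesis
    using assms(1,2) x' push_forward_nonzero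
    by (intro in_indep_spaceI[where S = "r ` {v. x v \<noteq> 0}"])
       (auto simp: push_forward_def intro: sum_nonneg)
qed

lemma push_forward_retraction:
  assumes "finite V" and "V' \<subseteq> V" and "\<And>v. v \<in> V' \<Longrightarrow> r v = v"
    and "\<And>v. x v \<noteq> 0 \<Longrightarrow> v \<in> V'"
  shows "push_forward r V x = x"
proof
  fix v
  have "push_forward r V x v = (\<Sum>w | w \<in> V \<and> r w = v. if w = v then x w else 0)"
    unfolding push_forward_def using assms by (intro sum.cong) (auto, metis)
  also have "\<dots> = x v"
    using assms by (auto simp: sum.delta)
  finally show "push_forward r V x v = x v" .
qed

lemma topspace_indep_space_mono:
  assumes "finite V" and "V' \<subseteq> V"
  shows "topspace (indep_space V' E) \<subseteq> topspace (indep_space V E)"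
proof
  fix y assume y: "y \<in> topspace (indep_space V' E)"
  have "finite V'" using assms finite_subset by blast
  moreover have "sum y V = sum y V'" if "{v. y v \<noteq> 0} \<subseteq> V'"
    using assms that by (intro sum.mono_neutral_right) auto
  ultimately show "y \<in> topspace (indep_space V E)"
    using y assms by (auto simp: topspace_indep_space)
qed

text \<open>Contiguity makes the support of \<open>x\<close> together with its image under \<open>r\<close> independent,
  so the segment from \<open>x\<close> to its push-forward stays in the realization.\<close>
lemma push_forward_segment_in_indep_space:
  assumes fin: "finite V" and r_into: "r ` V \<subseteq> V" and sym: "\<And>u v. E u v \<Longrightarrow> E v u"
    and contiguous: "\<And>u v. u \<in> V \<Longrightarrow> v \<in> V \<Longrightarrow> \<not> E u v \<Longrightarrow> \<not> E u (r v) \<and> \<not> E (r u) (r v)"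
    and x: "x \<in> topspace (indep_space V E)" and s: "0 \<le> s" "s \<le> 1"
  shows "(\<lambda>v. s * x v + (1 - s) * push_forward r V x v) \<in> topspace (indep_space V E)"
proof -
  let ?R = "push_forward r V"
  have x': "\<forall>v. 0 \<le> x v" "{v. x v \<noteq> 0} \<subseteq> V" "\<forall>u v. x u \<noteq> 0 \<longrightarrow> x v \<noteq> 0 \<longrightarrow> \<not> E u v"
    "sum x V = 1"
    using x fin by (auto simp: topspace_indep_space)
  have "?R x \<in> topspace (indep_space V E)"
    using push_forward_in_indep_space[OF fin fin r_into _ x] contiguous by blast
  then have Rx: "\<forall>v. 0 \<le> ?R x v" "sum (?R x) V = 1"
    using fin by (auto simp: topspace_indep_space)
  let ?S = "{v. x v \<noteq> 0} \<union> r ` {v. x v \<noteq> 0}"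
  have support: "v \<in> ?S" if "s * x v + (1 - s) * ?R x v \<noteq> 0" for v
    using that push_forward_nonzero[of r V x v] by auto
  have "?S \<subseteq> V"
    using x'(2) r_into by blast
  moreover have "\<not> E u v" if "u \<in> ?S" "v \<in> ?S" for u v
    using that x'(2,3) contiguous sym by blast
  moreover have "(\<Sum>v\<in>V. s * x v + (1 - s) * ?R x v) = s * sum x V + (1 - s) * sum (?R x) V"
    by (simp add: sum.distrib sum_distrib_left)
  ultimately show ?thesis
    using s x'(1,4) Rx support by (intro in_indep_spaceI[OF fin, where S = ?S]) auto
qed

lemma push_forward_homotopic_id:
  assumes fin: "finite V" and r_into: "r ` V \<subseteq> V" and sym: "\<And>u v. E u v \<Longrightarrow> E v u"
    and contiguous: "\<And>u v. u \<in> V \<Longrightarrow> v \<in> V \<Longrightarrow> \<not> E u v \<Longrightarrow> \<not> E u (r v) \<and> \<not> E (r u) (r v)"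
  shows "homotopic_with (\<lambda>x. True) (indep_space V E) (indep_space V E) (push_forward r V) id"
proof -
  let ?X = "indep_space V E" and ?R = "push_forward r V"
  let ?I = "prod_topology (top_of_set {0..1::real}) ?X"
  let ?h = "\<lambda>(s::real, x) v. s * x v + (1 - s) * ?R x v"
  have "continuous_map ?I ?X ?h"
  proof (rule continuous_map_into_geom_realization)
    fix v
    have "continuous_map ?I euclideanreal (\<lambda>p. snd p w)" for w
      using continuous_map_compose[OF continuous_map_snd continuous_map_geom_realization_coordinate]
      by (simp add: o_def)
    moreover have "continuous_map ?I euclideanreal (\<lambda>p. ?R (snd p) v)"
      using continuous_map_compose[OF continuous_map_snd continuous_map_push_forward[OF fin]]
      by (simp add: o_def)
    moreover have "continuous_map ?I euclideanreal fst"
      using continuous_map_into_fulltopology[OF continuous_map_fst] by blast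
    ultimately show "continuous_map ?I euclideanreal (\<lambda>p. ?h p v)"
      by (simp add: case_prod_unfold) (intro continuous_intros)
  next
    show "?h ` topspace ?I \<subseteq> topspace ?X"
      using push_forward_segment_in_indep_space[of V r E, OF fin r_into sym contiguous] by auto
  qed
  then show ?thesis
    by (subst homotopic_with) (auto intro!: exI[of _ ?h])
qed

lemma indep_space_retraction_homotopy_equivalent:
  assumes fin: "finite V" and sub: "V' \<subseteq> V" and r_into: "r ` V \<subseteq> V'"
    and r_id: "\<And>v. v \<in> V' \<Longrightarrow> r v = v" and sym: "\<And>u v. E u v \<Longrightarrow> E v u"
    and contiguous: "\<And>u v. u \<in> V \<Longrightarrow> v \<in> V \<Longrightarrow> \<not> E u v \<Longrightarrow> \<not> E u (r v) \<and> \<not> E (r u) (r v)"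
  shows "indep_space V E homotopy_equivalent_space indep_space V' E"
proof -
  let ?X = "indep_space V E" and ?Y = "indep_space V' E" and ?R = "push_forward r V"
  have fin': "finite V'" using fin sub finite_subset by blast
  have R_cont: "continuous_map ?X ?Y ?R"
    using push_forward_in_indep_space[OF fin fin' r_into] contiguous
    by (intro continuous_map_into_geom_realization continuous_map_push_forward fin) blast+
  have incl_cont: "continuous_map ?Y ?X id"
    using topspace_indep_space_mono[OF fin sub]
    by (intro continuous_map_into_geom_realization)
      (auto simp: continuous_map_geom_realization_coordinate)
  have "homotopic_with (\<lambda>x. True) ?X ?X (id \<circ> ?R) id"
  proof -
    have "r ` V \<subseteq> V" using r_into sub by blast
    then show ?thesis
      using push_forward_homotopic_id[of V r E, OF fin _ sym contiguous] by simp
  qed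
  moreover have "?R y = y" if "y \<in> topspace ?Y" for y
    using that fin' by (intro push_forward_retraction[OF fin sub r_id]) (auto simp: topspace_indep_space)
  then have "homotopic_with (\<lambda>x. True) ?Y ?Y (?R \<circ> id) id"
    using continuous_map_compose[OF incl_cont R_cont] by (intro homotopic_with_equal) auto
  ultimately show ?thesis
    unfolding homotopy_equivalent_space_def using R_cont incl_cont by blast
qed

lemma indep_space_fold_homotopy_equivalent:
  assumes fin: "finite V" and sub: "V' \<subseteq> V" and sym: "\<And>u v. E u v \<Longrightarrow> E v u"
    and fold: "\<And>w. w \<in> V - V' \<Longrightarrow> r w \<in> V' \<and> (\<forall>u\<in>V. E (r w) u \<longrightarrow> E w u)"
  shows "indep_space V E homotopy_equivalent_space indep_space V' E"
proof -
  define r' where "r' v = (if v \<in> V' then v else r v)" for v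
  have r'_into: "r' ` V \<subseteq> V'"
    using fold by (auto simp: r'_def)
  have dominated: "E w u" if "w \<in> V" "u \<in> V" "E (r' w) u" for w u
    using that fold by (auto simp: r'_def split: if_splits)
  have not_adj_r: "\<not> E u (r' v)" if "u \<in> V" "v \<in> V" "\<not> E u v" for u v
  proof
    assume "E u (r' v)"
    then show False
      using that dominated[of v u] sym by blast
  qed
  show ?thesis
  proof (rule indep_space_retraction_homotopy_equivalent[OF fin sub r'_into _ sym])
    show "r' v = v" if "v \<in> V'" for v
      using that by (simp add: r'_def)
    show "\<not> E u (r' v) \<and> \<not> E (r' u) (r' v)" if "u \<in> V" "v \<in> V" "\<not> E u v" for u v
      using that not_adj_r[of u v] dominated[of u "r' v"] r'_into sub by blast
  qed
qed

section \<open>Perfect matchings and spheres\<close>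

definition l1_norm :: "nat \<Rightarrow> (nat \<Rightarrow> real) \<Rightarrow> real" where
  "l1_norm p z = (\<Sum>i\<le>p. \<bar>z i\<bar>)"

definition l2_norm :: "nat \<Rightarrow> (nat \<Rightarrow> real) \<Rightarrow> real" where
  "l2_norm p z = sqrt (\<Sum>i\<le>p. (z i)\<^sup>2)"

definition l1_sphere :: "nat \<Rightarrow> (nat \<Rightarrow> real) topology" where
  "l1_sphere p = subtopology (powertop_real UNIV) {z. l1_norm p z = 1 \<and> (\<forall>i>p. z i = 0)}"

lemma topspace_l1_sphere: "topspace (l1_sphere p) = {z. l1_norm p z = 1 \<and> (\<forall>i>p. z i = 0)}"
  by (simp add: l1_sphere_def)

lemma topspace_nsphere_l2_norm: "topspace (nsphere p) = {z. l2_norm p z = 1 \<and> (\<forall>i>p. z i = 0)}"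
  by (simp add: nsphere l2_norm_def)

lemma continuous_map_l1_sphere_projection: "continuous_map (l1_sphere p) euclideanreal (\<lambda>z. z i)"
  unfolding l1_sphere_def
  by (rule continuous_map_from_subtopology[OF continuous_map_product_projection]) simp

lemma l1_norm_scale: "c > 0 \<Longrightarrow> l1_norm p (\<lambda>i. z i / c) = l1_norm p z / c"
  by (simp add: l1_norm_def sum_divide_distrib)

lemma l2_norm_scale:
  assumes "c > 0"
  shows "l2_norm p (\<lambda>i. z i / c) = l2_norm p z / c"
proof -
  have "l2_norm p (\<lambda>i. z i / c) = sqrt ((\<Sum>i\<le>p. (z i)\<^sup>2) / c\<^sup>2)"
    by (simp add: l2_norm_def power_divide sum_divide_distrib)
  then show ?thesis
    using assms by (simp add: l2_norm_def real_sqrt_divide)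
qed

lemma l2_norm_pos_if_l1_norm_eq_1:
  assumes "l1_norm p z = 1"
  shows "l2_norm p z > 0"
proof -
  have "\<exists>i\<le>p. z i \<noteq> 0"
    using assms by (rule contrapos_pp) (simp add: l1_norm_def)
  then obtain i where "i \<le> p" "z i \<noteq> 0" by blast
  then have "0 < (\<Sum>i\<le>p. (z i)\<^sup>2)"
    by (intro sum_pos2[of _ i]) auto
  then show ?thesis by (simp add: l2_norm_def)
qed

lemma l1_norm_pos_if_l2_norm_eq_1:
  assumes "l2_norm p z = 1"
  shows "l1_norm p z > 0"
proof -
  have "\<exists>i\<le>p. z i \<noteq> 0"
    using assms by (rule contrapos_pp) (simp add: l2_norm_def)
  then obtain i where "i \<le> p" "z i \<noteq> 0" by blast
  then show ?thesis
    unfolding l1_norm_def by (intro sum_pos2[of _ i]) auto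
qed

lemma l1_sphere_homeomorphic_nsphere: "l1_sphere p homeomorphic_space nsphere p"
proof -
  let ?f = "\<lambda>z i. z i / l2_norm p z" and ?g = "\<lambda>z i. z i / l1_norm p z"
  have f_pos: "l2_norm p z > 0" if "z \<in> topspace (l1_sphere p)" for z
    using that l2_norm_pos_if_l1_norm_eq_1 by (simp add: topspace_l1_sphere)
  have g_pos: "l1_norm p z > 0" if "z \<in> topspace (nsphere p)" for z
    using that l1_norm_pos_if_l2_norm_eq_1 by (simp add: topspace_nsphere_l2_norm)
  have f_into: "?f z \<in> topspace (nsphere p)" and g_f: "?g (?f z) = z"
    if "z \<in> topspace (l1_sphere p)" for z
    using that f_pos[OF that] l1_norm_scale l2_norm_scale
    by (auto simp: topspace_l1_sphere topspace_nsphere_l2_norm)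
  have g_into: "?g z \<in> topspace (l1_sphere p)" and f_g: "?f (?g z) = z"
    if "z \<in> topspace (nsphere p)" for z
    using that g_pos[OF that] l1_norm_scale l2_norm_scale
    by (auto simp: topspace_l1_sphere topspace_nsphere_l2_norm)
  have "continuous_map (l1_sphere p) euclideanreal (l2_norm p)"
    unfolding l2_norm_def
    by (intro continuous_map_sqrt continuous_map_sum continuous_map_real_pow
        continuous_map_l1_sphere_projection finite_atMost)
  then have f: "continuous_map (l1_sphere p) (nsphere p) ?f"
    using f_into f_pos
    unfolding nsphere continuous_map_in_subtopology continuous_map_componentwise_UNIV
    by (fastforce intro!: continuous_map_real_divide continuous_map_l1_sphere_projection)
  have "continuous_map (nsphere p) euclideanreal (l1_norm p)"
    unfolding l1_norm_def
    by (intro continuous_map_sum continuous_map_real_abs continuous_map_nsphere_projection finite_atMost)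
  then have g: "continuous_map (nsphere p) (l1_sphere p) ?g"
    using g_into g_pos
    unfolding l1_sphere_def continuous_map_in_subtopology continuous_map_componentwise_UNIV
    by (fastforce intro!: continuous_map_real_divide continuous_map_nsphere_projection)
  show ?thesis
    unfolding homeomorphic_space_def homeomorphic_maps_def using f g g_f f_g by blast
qed

text \<open>The independence complex of a perfect matching with \<open>p + 1\<close> edges is the boundary of
  the cross-polytope: the coordinates \<open>x (P e) - x (Q e)\<close> identify it with the unit sphere of
  the \<open>\<ell>\<^sub>1\<close>-norm, the inverse splitting each coordinate into its positive and negative part.\<close>
locale perfect_matching =
  fixes V :: "'a set" and E :: "'a \<Rightarrow> 'a \<Rightarrow> bool" and P Q :: "nat \<Rightarrow> 'a" and p :: nat
  assumes V_eq: "V = P ` {..p} \<union> Q ` {..p}"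
    and inj_P: "inj_on P {..p}" and inj_Q: "inj_on Q {..p}"
    and disjoint: "P ` {..p} \<inter> Q ` {..p} = {}"
    and E_iff: "\<And>u v. u \<in> V \<Longrightarrow> v \<in> V \<Longrightarrow>
      E u v \<longleftrightarrow> (\<exists>e\<le>p. (u = P e \<and> v = Q e) \<or> (u = Q e \<and> v = P e))"
begin

definition edge_coords :: "('a \<Rightarrow> real) \<Rightarrow> nat \<Rightarrow> real" where
  "edge_coords x e = (if e \<le> p then x (P e) - x (Q e) else 0)"

definition split_coords :: "(nat \<Rightarrow> real) \<Rightarrow> 'a \<Rightarrow> real" where
  "split_coords z v = (if v \<in> P ` {..p} then max (z (inv_into {..p} P v)) 0
    else if v \<in> Q ` {..p} then max (- z (inv_into {..p} Q v)) 0 else 0)"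

lemma finite_V: "finite V"
  by (simp add: V_eq)

lemma sum_V: "sum h V = (\<Sum>e\<le>p. h (P e) + h (Q e))"
  using disjoint inj_P inj_Q by (simp add: V_eq sum.union_disjoint sum.reindex sum.distrib)

lemma P_eq_iff: "e \<le> p \<Longrightarrow> e' \<le> p \<Longrightarrow> P e = P e' \<longleftrightarrow> e = e'"
  and Q_eq_iff: "e \<le> p \<Longrightarrow> e' \<le> p \<Longrightarrow> Q e = Q e' \<longleftrightarrow> e = e'"
  and P_neq_Q: "e \<le> p \<Longrightarrow> e' \<le> p \<Longrightarrow> P e \<noteq> Q e'"
  using inj_P inj_Q disjoint by (auto dest: inj_onD)

lemma split_coords_P: "e \<le> p \<Longrightarrow> split_coords z (P e) = max (z e) 0"
  and split_coords_Q: "e \<le> p \<Longrightarrow> split_coords z (Q e) = max (- z e) 0"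
  and split_coords_outside: "v \<notin> V \<Longrightarrow> split_coords z v = 0"
  using inj_P inj_Q disjoint by (auto simp: split_coords_def V_eq)

lemma edge_endpoint_zero:
  assumes "x \<in> topspace (indep_space V E)" "e \<le> p"
  shows "x (P e) = 0 \<or> x (Q e) = 0"
  using assms E_iff[of "P e" "Q e"] finite_V by (auto simp: V_eq topspace_indep_space)

lemma edge_coords_in_l1_sphere:
  assumes x: "x \<in> topspace (indep_space V E)"
  shows "edge_coords x \<in> topspace (l1_sphere p)"
proof -
  have "0 \<le> x v" for v
    using x finite_V by (simp add: topspace_indep_space)
  then have "\<bar>edge_coords x e\<bar> = x (P e) + x (Q e)" if "e \<le> p" for e
    using edge_endpoint_zero[OF x that] that by (auto simp: edge_coords_def)
  then have "(\<Sum>e\<le>p. \<bar>edge_coords x e\<bar>) = sum x V"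
    by (simp add: sum_V)
  then show ?thesis
    using x finite_V by (simp add: topspace_l1_sphere l1_norm_def edge_coords_def topspace_indep_space)
qed

lemma split_coords_in_indep_space:
  assumes z: "z \<in> topspace (l1_sphere p)"
  shows "split_coords z \<in> topspace (indep_space V E)"
proof (rule in_indep_spaceI[OF finite_V])
  let ?S = "P ` {e. e \<le> p \<and> z e > 0} \<union> Q ` {e. e \<le> p \<and> z e < 0}"
  show "0 \<le> split_coords z v" for v
    by (simp add: split_coords_def)
  show "v \<in> ?S" if "split_coords z v \<noteq> 0" for v
  proof -
    have "v \<in> V" using that split_coords_outside by blast
    then consider e where "e \<le> p" "v = P e" | e where "e \<le> p" "v = Q e"
      by (auto simp: V_eq)
    then show ?thesis
      using that by cases (auto simp: split_coords_P split_coords_Q max_def split: if_splits)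
  qed
  show "?S \<subseteq> V" by (auto simp: V_eq)
  show "\<not> E u v" if "u \<in> ?S" "v \<in> ?S" for u v
    using that E_iff[of u v] P_eq_iff Q_eq_iff P_neq_Q by (auto simp: V_eq) metis+
  have "max a 0 + max (- a) 0 = \<bar>a\<bar>" for a :: real
    by (simp add: max_def)
  then have "sum (split_coords z) V = l1_norm p z"
    by (simp add: sum_V split_coords_P split_coords_Q l1_norm_def)
  then show "sum (split_coords z) V = 1"
    using z by (simp add: topspace_l1_sphere)
qed

lemma split_edge_coords:
  assumes x: "x \<in> topspace (indep_space V E)"
  shows "split_coords (edge_coords x) = x"
proof
  fix v
  have nonneg: "0 \<le> x u" for u
    using x finite_V by (simp add: topspace_indep_space)
  show "split_coords (edge_coords x) v = x v"
  proof (cases "v \<in> V")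
    case True
    then consider e where "e \<le> p" "v = P e" | e where "e \<le> p" "v = Q e"
      by (auto simp: V_eq)
    then show ?thesis
      using edge_endpoint_zero[OF x] nonneg
      by cases (force simp: split_coords_P split_coords_Q edge_coords_def)+
  next
    case False
    then show ?thesis
      using x finite_V split_coords_outside by (auto simp: topspace_indep_space)
  qed
qed

lemma edge_split_coords: "z \<in> topspace (l1_sphere p) \<Longrightarrow> edge_coords (split_coords z) = z"
  by (auto simp: fun_eq_iff edge_coords_def split_coords_P split_coords_Q topspace_l1_sphere
      max_def not_le)

lemma indep_space_homeomorphic_l1_sphere: "indep_space V E homeomorphic_space l1_sphere p"
proof -
  have "continuous_map (indep_space V E) (l1_sphere p) edge_coords"
    unfolding l1_sphere_def continuous_map_in_subtopology continuous_map_componentwise_UNIV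
    using edge_coords_in_l1_sphere
    by (auto simp: edge_coords_def topspace_l1_sphere
        intro!: continuous_intros continuous_map_geom_realization_coordinate)
  moreover have "continuous_map (l1_sphere p) (indep_space V E) split_coords"
    using split_coords_in_indep_space
    by (intro continuous_map_into_geom_realization)
      (auto simp: split_coords_def intro!: continuous_intros continuous_map_l1_sphere_projection)
  ultimately show ?thesis
    unfolding homeomorphic_space_def homeomorphic_maps_def
    using edge_coords_in_l1_sphere split_coords_in_indep_space split_edge_coords edge_split_coords
    by blast
qed

end

section \<open>Path coordinates for \<open>n = 3m + 1\<close>\<close>

text \<open>For \<open>n = 3m + 1\<close> the \<open>b\<close>- and \<open>c\<close>-vertices form two paths (sides 1 and 2; side 0
  marks the \<open>a\<close>-vertices), on which \<open>b\<^sub>i\<^sub>,\<^sub>j\<close> and \<open>c\<^sub>i\<^sub>,\<^sub>j\<close> sit at position \<open>(i - 1) 3m + j\<close>;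
  the vertex \<open>a\<^sub>i\<close> is joined to the positions \<open>3mi\<close> and \<open>3mi + 1\<close> of both paths.\<close>
fun path_side :: "vtx \<Rightarrow> nat" where
  "path_side (A i) = 0" | "path_side (B i j) = 1" | "path_side (C i j) = 2"

fun path_pos :: "nat \<Rightarrow> vtx \<Rightarrow> nat" where
  "path_pos m (A i) = 0"
| "path_pos m (B i j) = (i - 1) * (3 * m) + j"
| "path_pos m (C i j) = (i - 1) * (3 * m) + j"

fun a_index :: "vtx \<Rightarrow> nat" where
  "a_index (A i) = i" | "a_index (B i j) = 0" | "a_index (C i j) = 0"

definition path_edge :: "nat \<Rightarrow> vtx \<Rightarrow> vtx \<Rightarrow> bool" where
  "path_edge m u v \<longleftrightarrow>
     (path_side u \<noteq> 0 \<and> path_side v = path_side u \<and> path_pos m v = path_pos m u + 1)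
   \<or> (path_side u = 0 \<and> path_side v \<noteq> 0 \<and> path_pos m v \<in> {3 * m * a_index u, 3 * m * a_index u + 1})"

definition path_adj :: "nat \<Rightarrow> vtx \<Rightarrow> vtx \<Rightarrow> bool" where
  "path_adj m u v \<longleftrightarrow> path_edge m u v \<or> path_edge m v u"

definition path_vtx :: "nat \<Rightarrow> nat \<Rightarrow> nat \<Rightarrow> vtx" where
  "path_vtx m s p = (if s = 1 then B else C) ((p - 1) div (3 * m) + 1) ((p - 1) mod (3 * m) + 1)"

lemma Gverts_iff [simp]:
  "A i \<in> Gverts n t \<longleftrightarrow> i \<le> t"
  "B i j \<in> Gverts n t \<longleftrightarrow> 1 \<le> i \<and> i \<le> t \<and> 1 \<le> j \<and> j \<le> n - 1"
  "C i j \<in> Gverts n t \<longleftrightarrow> 1 \<le> i \<and> i \<le> t \<and> 1 \<le> j \<and> j \<le> n - 1"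
  by (auto simp: Gverts_def)

lemma finite_Gverts: "finite (Gverts n t)"
proof -
  have "Gverts n t \<subseteq> A ` {..t} \<union> case_prod B ` ({..t} \<times> {..n}) \<union> case_prod C ` ({..t} \<times> {..n})"
    by (auto simp: Gverts_def)
  then show ?thesis by (rule finite_subset) auto
qed

lemma Gedge0_simps:
  "Gedge0 n t (A i) (A k) \<longleftrightarrow> False"
  "Gedge0 n t (B i j) (A k) \<longleftrightarrow> False"
  "Gedge0 n t (C i j) (A k) \<longleftrightarrow> False"
  "Gedge0 n t (B i j) (C k l) \<longleftrightarrow> False"
  "Gedge0 n t (C i j) (B k l) \<longleftrightarrow> False"
  "Gedge0 n t (A i) (B k l) \<longleftrightarrow> 1 \<le> k \<and> k \<le> t \<and> ((i = k - 1 \<and> l = 1) \<or> (i = k \<and> l = n - 1))"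
  "Gedge0 n t (A i) (C k l) \<longleftrightarrow> 1 \<le> k \<and> k \<le> t \<and> ((i = k - 1 \<and> l = 1) \<or> (i = k \<and> l = n - 1))"
  "Gedge0 n t (B i j) (B k l) \<longleftrightarrow> (1 \<le> i \<and> i \<le> t \<and> 1 \<le> j \<and> j \<le> n - 2 \<and> k = i \<and> l = j + 1)
      \<or> (1 \<le> i \<and> i \<le> t - 1 \<and> j = n - 1 \<and> k = i + 1 \<and> l = 1)"
  "Gedge0 n t (C i j) (C k l) \<longleftrightarrow> (1 \<le> i \<and> i \<le> t \<and> 1 \<le> j \<and> j \<le> n - 2 \<and> k = i \<and> l = j + 1)
      \<or> (1 \<le> i \<and> i \<le> t - 1 \<and> j = n - 1 \<and> k = i + 1 \<and> l = 1)"
  by (auto simp: Gedge0_def)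

lemma block_pos_eq_iff:
  fixes M i j k l :: nat
  assumes "1 \<le> i" "1 \<le> j" "j \<le> M" "1 \<le> k" "1 \<le> l" "l \<le> M"
  shows "(i - 1) * M + j = (k - 1) * M + l \<longleftrightarrow> i = k \<and> j = l"
proof
  obtain i' j' k' l' where ijkl: "i = Suc i'" "j = Suc j'" "k = Suc k'" "l = Suc l'"
    using assms by (metis One_nat_def Suc_le_D)
  assume "(i - 1) * M + j = (k - 1) * M + l"
  then have "(j' + i' * M) div M = (l' + k' * M) div M" "(j' + i' * M) mod M = (l' + k' * M) mod M"
    using ijkl by (simp_all add: add.commute)
  moreover have "j' < M" "l' < M"
    using assms ijkl by simp_all
  ultimately show "i = k \<and> j = l"
    using ijkl by simp
qed simp

lemma block_pos_eq_Suc_iff: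
  fixes M i j k l :: nat
  assumes "1 \<le> i" "1 \<le> j" "j \<le> M" "1 \<le> k" "1 \<le> l" "l \<le> M"
  shows "(k - 1) * M + l = (i - 1) * M + j + 1 \<longleftrightarrow> (k = i \<and> l = j + 1) \<or> (k = i + 1 \<and> j = M \<and> l = 1)"
proof (cases "j < M")
  case True
  then show ?thesis
    using block_pos_eq_iff[of k l M i "j + 1"] assms by auto
next
  case False
  then have "(i - 1) * M + j + 1 = ((i + 1) - 1) * M + 1"
    using assms by (simp add: algebra_simps)
  then show ?thesis
    using block_pos_eq_iff[of k l M "i + 1" 1] assms False by auto
qed

lemma block_pos_eq_mult_iff:
  fixes M i k l :: nat
  assumes "1 \<le> k" "1 \<le> l" "l \<le> M"
  shows "(k - 1) * M + l = M * i \<longleftrightarrow> k = i \<and> l = M"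
    and "(k - 1) * M + l = M * i + 1 \<longleftrightarrow> k = i + 1 \<and> l = 1"
proof -
  show "(k - 1) * M + l = M * i \<longleftrightarrow> k = i \<and> l = M"
  proof (cases i)
    case (Suc i')
    then have "M * i = ((i' + 1) - 1) * M + M" by (simp add: algebra_simps)
    then show ?thesis
      using block_pos_eq_iff[of k l M "i' + 1" M] assms Suc by auto
  qed (use assms in auto)
  have "M * i + 1 = ((i + 1) - 1) * M + 1" by (simp add: algebra_simps)
  then show "(k - 1) * M + l = M * i + 1 \<longleftrightarrow> k = i + 1 \<and> l = 1"
    using block_pos_eq_iff[of k l M "i + 1" 1] assms by auto
qed

lemma Gedge0_iff_path_edge:
  assumes "u \<in> Gverts (3 * m + 1) t" "v \<in> Gverts (3 * m + 1) t"
  shows "Gedge0 (3 * m + 1) t u v \<longleftrightarrow> path_edge m u v"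
proof (cases u)
  case (A i)
  show ?thesis
  proof (cases v)
    case (B k l)
    then show ?thesis
      using A assms block_pos_eq_mult_iff[of k l "3 * m" i] by (auto simp: Gedge0_simps path_edge_def)
  next
    case (C k l)
    then show ?thesis
      using A assms block_pos_eq_mult_iff[of k l "3 * m" i] by (auto simp: Gedge0_simps path_edge_def)
  qed (simp add: A Gedge0_simps path_edge_def)
next
  case (B i j)
  show ?thesis
  proof (cases v)
    case (B k l)
    then show ?thesis
      using \<open>u = B i j\<close> assms block_pos_eq_Suc_iff[of i j "3 * m" k l]
      by (auto simp: Gedge0_simps path_edge_def)
  qed (simp_all add: B Gedge0_simps path_edge_def)
next
  case (C i j)
  show ?thesis
  proof (cases v)
    case (C k l)
    then show ?thesis
      using \<open>u = C i j\<close> assms block_pos_eq_Suc_iff[of i j "3 * m" k l]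
      by (auto simp: Gedge0_simps path_edge_def)
  qed (simp_all add: C Gedge0_simps path_edge_def)
qed

lemma Gadj_iff_path_adj:
  "u \<in> Gverts (3 * m + 1) t \<Longrightarrow> v \<in> Gverts (3 * m + 1) t \<Longrightarrow>
    Gadj (3 * m + 1) t u v \<longleftrightarrow> path_adj m u v"
  unfolding Gadj_def path_adj_def using Gedge0_iff_path_edge by blast

lemma path_pos_bounds:
  assumes "v \<in> Gverts (3 * m + 1) t" "path_side v \<noteq> 0"
  shows "1 \<le> path_pos m v" "path_pos m v \<le> 3 * (t * m)"
proof -
  have "(i - 1) * (3 * m) + j \<le> 3 * (t * m)" if "1 \<le> i" "i \<le> t" "j \<le> 3 * m" for i j
  proof -
    have "(i - 1) * (3 * m) \<le> (t - 1) * (3 * m)"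
      using that by (intro mult_le_mono1) simp
    moreover have "(t - 1) * (3 * m) + 3 * m = 3 * (t * m)" using that
      by (cases t) (auto simp: algebra_simps)
    ultimately show ?thesis using that by linarith
  qed
  then show "1 \<le> path_pos m v" "path_pos m v \<le> 3 * (t * m)"
    using assms by (cases v; auto)+
qed

lemma path_vtx:
  assumes "m \<ge> 1" "s \<in> {1, 2}" "1 \<le> p" "p \<le> 3 * (t * m)"
  shows "path_vtx m s p \<in> Gverts (3 * m + 1) t" "path_side (path_vtx m s p) = s"
    "path_pos m (path_vtx m s p) = p"
proof -
  have "(p - 1) div (3 * m) < t"
    using assms by (simp add: div_less_iff_less_mult mult.commute mult.left_commute)
  moreover have "(p - 1) mod (3 * m) < 3 * m"
    using assms by simp
  moreover have "(p - 1) div (3 * m) * (3 * m) + (p - 1) mod (3 * m) + 1 = p"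
    using assms div_mult_mod_eq[of "p - 1" "3 * m"] by linarith
  ultimately show "path_vtx m s p \<in> Gverts (3 * m + 1) t" "path_side (path_vtx m s p) = s"
    "path_pos m (path_vtx m s p) = p"
    using assms by (auto simp: path_vtx_def Suc_le_eq)
qed

lemma path_side_pos_inj:
  assumes "u \<in> Gverts (3 * m + 1) t" "v \<in> Gverts (3 * m + 1) t" "path_side u \<noteq> 0"
    and "path_side u = path_side v" "path_pos m u = path_pos m v"
  shows "u = v"
proof (cases u)
  case (B i j)
  moreover obtain k l where "v = B k l"
    using assms B by (cases v) auto
  ultimately show ?thesis
    using assms block_pos_eq_iff[of i j "3 * m" k l] by auto
next
  case (C i j)
  moreover obtain k l where "v = C k l"
    using assms C by (cases v) auto
  ultimately show ?thesis
    using assms block_pos_eq_iff[of i j "3 * m" k l] by auto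
qed (use assms in simp)

definition X_verts :: "nat \<Rightarrow> nat \<Rightarrow> vtx set" where
  "X_verts m t = Gverts (3 * m + 1) t - closed_nbhd (Gverts (3 * m + 1) t) (Gadj (3 * m + 1) t) (A t)"

lemma mem_X_verts:
  "v \<in> X_verts m t \<longleftrightarrow>
    v \<in> Gverts (3 * m + 1) t \<and> v \<noteq> A t \<and> (path_side v \<noteq> 0 \<longrightarrow> path_pos m v < 3 * (t * m))"
proof (cases "v \<in> Gverts (3 * m + 1) t")
  case True
  have "path_side v \<noteq> 0 \<Longrightarrow> path_pos m v \<le> 3 * (t * m)"
    using True by (rule path_pos_bounds)
  moreover from this have "Gadj (3 * m + 1) t (A t) v \<longleftrightarrow> path_side v \<noteq> 0 \<and> path_pos m v = 3 * (t * m)"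
    using True Gadj_iff_path_adj[of "A t" m t v] by (auto simp: path_adj_def path_edge_def mult_ac)
  ultimately show ?thesis
    using True by (auto simp: X_verts_def closed_nbhd_def)
qed (simp add: X_verts_def)

lemma finite_X_verts: "finite (X_verts m t)"
  by (simp add: X_verts_def finite_Gverts)

section \<open>Folding \<open>X\<^sub>t\<close> onto a perfect matching\<close>

lemma path_side_cases: "path_side v \<noteq> 0 \<Longrightarrow> path_side v \<in> {1, 2}"
  by (cases v) auto

lemma Gadj_sym: "Gadj n t u v \<Longrightarrow> Gadj n t v u"
  by (auto simp: Gadj_def)

lemma Gadj_if_path_edge:
  "u \<in> Gverts (3 * m + 1) t \<Longrightarrow> v \<in> Gverts (3 * m + 1) t \<Longrightarrow> path_edge m u v \<Longrightarrow>
    Gadj (3 * m + 1) t u v"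
  using Gadj_iff_path_adj[of u m t v] by (simp add: path_adj_def)

text \<open>A path vertex at a position \<open>\<equiv> 2 (mod 3)\<close> has no \<open>a\<close>-neighbour, so once its successor
  is gone it is dominated by every vertex adjacent to its predecessor.\<close>
lemma Gadj_pos_mod_3_eq_2_dominated:
  assumes S: "S \<subseteq> Gverts (3 * m + 1) t" and y: "y \<in> Gverts (3 * m + 1) t"
    and y_side: "path_side y \<noteq> 0" and y_pos: "path_pos m y mod 3 = 2"
    and no_succ: "\<And>u. u \<in> S \<Longrightarrow> path_side u = path_side y \<Longrightarrow> path_pos m u \<noteq> path_pos m y + 1"
    and pred: "\<And>u. u \<in> S \<Longrightarrow> path_side u = path_side y \<Longrightarrow> path_pos m u + 1 = path_pos m y \<Longrightarrow>
      Gadj (3 * m + 1) t w u"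
  shows "\<forall>u\<in>S. Gadj (3 * m + 1) t y u \<longrightarrow> Gadj (3 * m + 1) t w u"
proof (intro ballI impI)
  fix u assume u: "u \<in> S" and adj: "Gadj (3 * m + 1) t y u"
  have u_G: "u \<in> Gverts (3 * m + 1) t"
    using u S by blast
  have "path_pos m y \<noteq> 3 * q" "path_pos m y \<noteq> 3 * q + 1" for q
    using y_pos by presburger+
  then have "path_side u = path_side y \<and> (path_pos m u + 1 = path_pos m y \<or> path_pos m u = path_pos m y + 1)"
    using adj Gadj_iff_path_adj[OF y u_G] y_side
    by (auto simp: path_adj_def path_edge_def mult.assoc)
  then show "Gadj (3 * m + 1) t w u"
    using u no_succ pred by blast
qed

text \<open>In stage \<open>k\<close> the path vertices at the \<open>k\<close> largest multiples of 3 have been removed.\<close>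
definition fold_stage :: "nat \<Rightarrow> nat \<Rightarrow> nat \<Rightarrow> vtx set" where
  "fold_stage m t k = {v \<in> X_verts m t.
     path_side v \<noteq> 0 \<and> 3 dvd path_pos m v \<longrightarrow> path_pos m v < 3 * (t * m - k)}"

lemma fold_stage_0: "fold_stage m t 0 = X_verts m t"
  by (auto simp: fold_stage_def mem_X_verts)

lemma finite_fold_stage: "finite (fold_stage m t k)"
  by (simp add: fold_stage_def finite_X_verts)

lemma fold_stage_subset_Gverts: "fold_stage m t k \<subseteq> Gverts (3 * m + 1) t"
  by (auto simp: fold_stage_def mem_X_verts)

text \<open>The vertex at position \<open>c = 3 (tm - k - 1)\<close> is dominated by the one at \<open>c + 2\<close>.\<close>
lemma fold_stage_Suc_homotopy_equivalent:
  assumes m: "m \<ge> 1" and k: "Suc k < t * m"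
  shows "indep_space (fold_stage m t k) (Gadj (3 * m + 1) t)
    homotopy_equivalent_space indep_space (fold_stage m t (Suc k)) (Gadj (3 * m + 1) t)"
proof (rule indep_space_fold_homotopy_equivalent[OF finite_fold_stage _ Gadj_sym])
  let ?r = "\<lambda>v. path_vtx m (path_side v) (path_pos m v + 2)"
  define c where "c = 3 * (t * m - Suc k)"
  have c: "3 * (t * m - k) = c + 3" "c + 3 \<le> 3 * (t * m)" "3 dvd c"
    using k by (auto simp: c_def)
  then have c_mod: "(c + 2) mod 3 = 2" "3 dvd c + 3" "\<not> 3 dvd c + 2"
    by presburger+
  show "fold_stage m t (Suc k) \<subseteq> fold_stage m t k"
    by (auto simp: fold_stage_def)
  fix w assume w: "w \<in> fold_stage m t k - fold_stage m t (Suc k)"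
  then have w_G: "w \<in> Gverts (3 * m + 1) t" and w_side: "path_side w \<noteq> 0"
    and "3 dvd path_pos m w" "c \<le> path_pos m w" "path_pos m w < c + 3"
    by (auto simp: fold_stage_def mem_X_verts c c_def[symmetric])
  then have w_pos: "path_pos m w = c"
    using \<open>3 dvd c\<close> by presburger
  have rw: "?r w \<in> Gverts (3 * m + 1) t" "path_side (?r w) = path_side w" "path_pos m (?r w) = c + 2"
    using path_vtx[OF m path_side_cases[OF w_side], of "c + 2" t] w_pos c by auto
  show "?r w \<in> fold_stage m t (Suc k) \<and>
      (\<forall>u\<in>fold_stage m t k. Gadj (3 * m + 1) t (?r w) u \<longrightarrow> Gadj (3 * m + 1) t w u)"
  proof
    show "?r w \<in> fold_stage m t (Suc k)"
      using rw w_side c c_mod by (auto simp: fold_stage_def mem_X_verts)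
    show "\<forall>u\<in>fold_stage m t k. Gadj (3 * m + 1) t (?r w) u \<longrightarrow> Gadj (3 * m + 1) t w u"
    proof (rule Gadj_pos_mod_3_eq_2_dominated[OF fold_stage_subset_Gverts rw(1)])
      show "path_pos m u \<noteq> path_pos m (?r w) + 1"
        if u: "u \<in> fold_stage m t k" "path_side u = path_side (?r w)" for u
      proof
        assume "path_pos m u = path_pos m (?r w) + 1"
        then have "path_pos m u = c + 3" using rw by simp
        then show False
          using u w_side rw c(1) c_mod(2) unfolding fold_stage_def by auto
      qed
      show "Gadj (3 * m + 1) t w u" if "u \<in> fold_stage m t k" "path_side u = path_side (?r w)"
        "path_pos m u + 1 = path_pos m (?r w)" for u
        using that rw w_pos w_side fold_stage_subset_Gverts
        by (intro Gadj_if_path_edge[OF w_G]) (auto simp: path_edge_def)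
    qed (use rw w_side c_mod in auto)
  qed
qed

lemma X_verts_homotopy_equivalent_fold_stage:
  assumes "m \<ge> 1" "k < t * m"
  shows "indep_space (X_verts m t) (Gadj (3 * m + 1) t)
    homotopy_equivalent_space indep_space (fold_stage m t k) (Gadj (3 * m + 1) t)"
  using assms(2)
proof (induction k)
  case 0
  then show ?case by (simp add: fold_stage_0 homotopy_equivalent_space_refl)
next
  case (Suc k)
  then show ?case
    using fold_stage_Suc_homotopy_equivalent[OF assms(1) Suc.prems] homotopy_eqv_trans by simp
qed

definition matching_verts :: "nat \<Rightarrow> nat \<Rightarrow> vtx set" where
  "matching_verts m t = {v \<in> X_verts m t. path_side v \<noteq> 0 \<and> \<not> 3 dvd path_pos m v}"

lemma fold_stage_last:
  assumes "m \<ge> 1" "t \<ge> 1"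
  shows "fold_stage m t (t * m - 1) = {v \<in> X_verts m t. path_side v \<noteq> 0 \<longrightarrow> \<not> 3 dvd path_pos m v}"
proof -
  have "3 * (t * m - (t * m - 1)) = 3" using assms by simp
  moreover have "\<not> 3 dvd path_pos m v" if "v \<in> X_verts m t" "path_side v \<noteq> 0" "path_pos m v < 3" for v
    using that path_pos_bounds(1)[of v m t] by (simp add: mem_X_verts) presburger
  ultimately show ?thesis
    unfolding fold_stage_def by auto
qed

lemma path_vtx_3mi_plus_2:
  assumes m: "m \<ge> 1" and "i < t"
  shows "path_vtx m 1 (3 * m * i + 2) \<in> matching_verts m t"
    "path_vtx m 1 (3 * m * i + 2) \<in> Gverts (3 * m + 1) t"
    "path_side (path_vtx m 1 (3 * m * i + 2)) = 1"
    "path_pos m (path_vtx m 1 (3 * m * i + 2)) = 3 * m * i + 2"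
    "path_pos m (path_vtx m 1 (3 * m * i + 2)) mod 3 = 2"
proof -
  have "3 * m * i + 3 \<le> 3 * m * (i + 1)"
    using m by simp
  also have "\<dots> \<le> 3 * m * t"
    using \<open>i < t\<close> by (intro mult_le_mono2) simp
  finally have "3 * m * i + 2 < 3 * (t * m)"
    by (simp add: mult_ac)
  moreover have "(3 * m * i + 2) mod 3 = 2"
    unfolding mult.assoc by presburger
  ultimately show "path_vtx m 1 (3 * m * i + 2) \<in> matching_verts m t"
    "path_vtx m 1 (3 * m * i + 2) \<in> Gverts (3 * m + 1) t"
    "path_side (path_vtx m 1 (3 * m * i + 2)) = 1"
    "path_pos m (path_vtx m 1 (3 * m * i + 2)) = 3 * m * i + 2"
    "path_pos m (path_vtx m 1 (3 * m * i + 2)) mod 3 = 2"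
    using path_vtx[OF m, of 1 "3 * m * i + 2" t]
    by (auto simp: matching_verts_def mem_X_verts dvd_eq_mod_eq_0)
qed

text \<open>Once all multiples of 3 are gone, \<open>a\<^sub>i\<close> is dominated by the \<open>b\<close>-vertex at \<open>3mi + 2\<close>.\<close>
lemma fold_stage_last_homotopy_equivalent:
  assumes m: "m \<ge> 1" and t: "t \<ge> 1"
  shows "indep_space (fold_stage m t (t * m - 1)) (Gadj (3 * m + 1) t)
    homotopy_equivalent_space indep_space (matching_verts m t) (Gadj (3 * m + 1) t)"
proof (rule indep_space_fold_homotopy_equivalent[OF finite_fold_stage _ Gadj_sym])
  let ?r = "\<lambda>v. path_vtx m 1 (3 * m * a_index v + 2)"
  note last_stage = fold_stage_last[OF m t]
  show "matching_verts m t \<subseteq> fold_stage m t (t * m - 1)"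
    unfolding last_stage matching_verts_def by auto
  fix w assume w: "w \<in> fold_stage m t (t * m - 1) - matching_verts m t"
  then obtain i where w_eq: "w = A i" and "i < t"
    unfolding last_stage matching_verts_def by (cases w) (auto simp: mem_X_verts)
  have "?r w = path_vtx m 1 (3 * m * i + 2)"
    using w_eq by simp
  note rw = path_vtx_3mi_plus_2[OF m \<open>i < t\<close>, folded this]
  show "?r w \<in> matching_verts m t \<and>
      (\<forall>u\<in>fold_stage m t (t * m - 1). Gadj (3 * m + 1) t (?r w) u \<longrightarrow> Gadj (3 * m + 1) t w u)"
  proof
    show "?r w \<in> matching_verts m t"
      using rw(1) .
    show "\<forall>u\<in>fold_stage m t (t * m - 1). Gadj (3 * m + 1) t (?r w) u \<longrightarrow> Gadj (3 * m + 1) t w u"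
    proof (rule Gadj_pos_mod_3_eq_2_dominated[OF fold_stage_subset_Gverts rw(2)])
      show "path_pos m u \<noteq> path_pos m (?r w) + 1"
        if u: "u \<in> fold_stage m t (t * m - 1)" "path_side u = path_side (?r w)" for u
      proof
        assume "path_pos m u = path_pos m (?r w) + 1"
        then have "path_pos m u = 3 * (m * i + 1)"
          using rw by (simp add: algebra_simps)
        then show False
          using u rw unfolding last_stage by simp
      qed
      show "Gadj (3 * m + 1) t w u" if "u \<in> fold_stage m t (t * m - 1)"
        "path_side u = path_side (?r w)" "path_pos m u + 1 = path_pos m (?r w)" for u
        using that rw w_eq \<open>i < t\<close> fold_stage_subset_Gverts
        by (intro Gadj_if_path_edge) (auto simp: path_edge_def)
    qed (use rw in auto)
  qed
qed

definition match_vtx :: "nat \<Rightarrow> nat \<Rightarrow> nat \<Rightarrow> nat \<Rightarrow> vtx" where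
  "match_vtx m t e d = path_vtx m (1 + e div (t * m)) (3 * (e mod (t * m)) + d)"

lemma match_vtx:
  assumes m: "m \<ge> 1" and e: "e < 2 * (t * m)" and d: "d \<in> {1, 2}"
  shows "match_vtx m t e d \<in> matching_verts m t"
    "path_side (match_vtx m t e d) = 1 + e div (t * m)"
    "path_pos m (match_vtx m t e d) = 3 * (e mod (t * m)) + d"
proof -
  have "0 < t * m"
    using e by (cases "t * m") auto
  then have "e div (t * m) < 2" "e mod (t * m) < t * m"
    using e by (simp_all add: div_less_iff_less_mult)
  then have side: "1 + e div (t * m) \<in> {1, 2}" and pos: "3 * (e mod (t * m)) + d < 3 * (t * m)"
    using d by auto
  then show "path_side (match_vtx m t e d) = 1 + e div (t * m)"
    "path_pos m (match_vtx m t e d) = 3 * (e mod (t * m)) + d"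
    using path_vtx[OF m side, of "3 * (e mod (t * m)) + d" t] d by (auto simp: match_vtx_def)
  moreover have "(3 * (e mod (t * m)) + d) mod 3 = d"
    using d by auto
  then have "\<not> 3 dvd 3 * (e mod (t * m)) + d"
    using d by (auto simp: dvd_eq_mod_eq_0)
  ultimately show "match_vtx m t e d \<in> matching_verts m t"
    using path_vtx[OF m side, of "3 * (e mod (t * m)) + d" t] d pos
    by (auto simp: match_vtx_def matching_verts_def mem_X_verts)
qed

lemma matching_verts_eq_match_vtx:
  assumes m: "m \<ge> 1" and v: "v \<in> matching_verts m t"
  defines "e \<equiv> (path_side v - 1) * (t * m) + path_pos m v div 3"
  shows "e < 2 * (t * m)" "path_pos m v mod 3 \<in> {1, 2}" "match_vtx m t e (path_pos m v mod 3) = v"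
proof -
  have v_G: "v \<in> Gverts (3 * m + 1) t" and side: "path_side v \<in> {1, 2}"
    and pos: "path_pos m v < 3 * (t * m)" "\<not> 3 dvd path_pos m v"
    using v path_side_cases by (auto simp: matching_verts_def mem_X_verts)
  have q: "path_pos m v div 3 < t * m" using pos by linarith
  then have "0 < t * m" by linarith
  then have "e div (t * m) = path_side v - 1" "e mod (t * m) = path_pos m v div 3"
    using q by (simp_all add: e_def add.commute[of "_ * (t * m)"])
  then show "e < 2 * (t * m)"
    using side div_less_iff_less_mult[OF \<open>0 < t * m\<close>, of e 2] by auto
  have "path_pos m v mod 3 = 1 \<or> path_pos m v mod 3 = 2"
    using pos(2) by presburger
  then show d: "path_pos m v mod 3 \<in> {1, 2}" by auto
  show "match_vtx m t e (path_pos m v mod 3) = v"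
  proof (rule sym, rule path_side_pos_inj[OF v_G])
    show "match_vtx m t e (path_pos m v mod 3) \<in> Gverts (3 * m + 1) t"
      using match_vtx(1)[OF m \<open>e < 2 * (t * m)\<close> d] by (simp add: matching_verts_def mem_X_verts)
  qed (use side match_vtx(2,3)[OF m \<open>e < 2 * (t * m)\<close> d]
        \<open>e div (t * m) = path_side v - 1\<close> \<open>e mod (t * m) = path_pos m v div 3\<close> in auto)
qed

lemma matching_verts_eq:
  assumes m: "m \<ge> 1"
  shows "matching_verts m t =
    (\<lambda>e. match_vtx m t e 1) ` {..<2 * (t * m)} \<union> (\<lambda>e. match_vtx m t e 2) ` {..<2 * (t * m)}"
proof
  show "matching_verts m t \<subseteq>
      (\<lambda>e. match_vtx m t e 1) ` {..<2 * (t * m)} \<union> (\<lambda>e. match_vtx m t e 2) ` {..<2 * (t * m)}"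
  proof
    fix v assume "v \<in> matching_verts m t"
    then obtain e d where "e < 2 * (t * m)" "d \<in> {1, 2}" "v = match_vtx m t e d"
      using matching_verts_eq_match_vtx[OF m] by metis
    then show "v \<in> (\<lambda>e. match_vtx m t e 1) ` {..<2 * (t * m)} \<union> (\<lambda>e. match_vtx m t e 2) ` {..<2 * (t * m)}"
      by auto
  qed
qed (use match_vtx(1)[OF m] in auto)

lemma match_vtx_inj:
  assumes m: "m \<ge> 1" and "e < 2 * (t * m)" "e' < 2 * (t * m)" "d \<in> {1, 2}" "d' \<in> {1, 2}"
    and eq: "match_vtx m t e d = match_vtx m t e' d'"
  shows "e = e' \<and> d = d'"
proof -
  have "1 + e div (t * m) = 1 + e' div (t * m)" "3 * (e mod (t * m)) + d = 3 * (e' mod (t * m)) + d'"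
    using match_vtx(2,3)[OF m] assms by metis+
  moreover have "d = (3 * (e mod (t * m)) + d) mod 3" "d' = (3 * (e' mod (t * m)) + d') mod 3"
    using assms(4,5) by auto
  ultimately have "e div (t * m) = e' div (t * m)" "e mod (t * m) = e' mod (t * m)" "d = d'"
    by simp_all
  then show ?thesis
    by (metis div_mult_mod_eq)
qed

lemma path_edge_matching_verts:
  assumes m: "m \<ge> 1" and u: "u \<in> matching_verts m t" and v: "v \<in> matching_verts m t"
    and uv: "path_edge m u v"
  shows "\<exists>e<2 * (t * m). u = match_vtx m t e 1 \<and> v = match_vtx m t e 2"
proof -
  have side: "path_side v = path_side u" and pos: "path_pos m v = path_pos m u + 1"
    using u uv by (auto simp: path_edge_def matching_verts_def)
  have "\<not> 3 dvd path_pos m u" "\<not> 3 dvd path_pos m u + 1"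
    using u v pos by (simp_all add: matching_verts_def)
  moreover have "p mod 3 = 1 \<and> (p + 1) mod 3 = 2 \<and> (p + 1) div 3 = p div 3"
    if "\<not> 3 dvd p" "\<not> 3 dvd p + 1" for p :: nat
    using that by presburger
  ultimately have "path_pos m u mod 3 = 1" "path_pos m v mod 3 = 2"
    "path_pos m v div 3 = path_pos m u div 3"
    unfolding pos by blast+
  then have "match_vtx m t ((path_side u - 1) * (t * m) + path_pos m u div 3) 1 = u"
    "match_vtx m t ((path_side u - 1) * (t * m) + path_pos m u div 3) 2 = v"
    "(path_side u - 1) * (t * m) + path_pos m u div 3 < 2 * (t * m)"
    using matching_verts_eq_match_vtx[OF m u] matching_verts_eq_match_vtx[OF m v] side by simp_all
  then show ?thesis by metis
qed

lemma Gadj_matching_verts_iff: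
  assumes m: "m \<ge> 1" and u: "u \<in> matching_verts m t" and v: "v \<in> matching_verts m t"
  shows "Gadj (3 * m + 1) t u v \<longleftrightarrow>
    (\<exists>e<2 * (t * m). (u = match_vtx m t e 1 \<and> v = match_vtx m t e 2)
      \<or> (u = match_vtx m t e 2 \<and> v = match_vtx m t e 1))"
proof -
  have G: "u \<in> Gverts (3 * m + 1) t" "v \<in> Gverts (3 * m + 1) t"
    using u v by (simp_all add: matching_verts_def mem_X_verts)
  have edge: "path_edge m (match_vtx m t e 1) (match_vtx m t e 2)" if "e < 2 * (t * m)" for e
    using match_vtx(1-3)[OF m that, of 1] match_vtx(1-3)[OF m that, of 2]
    by (auto simp: path_edge_def matching_verts_def)
  show ?thesis
  proof
    assume "Gadj (3 * m + 1) t u v"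
    then have "path_edge m u v \<or> path_edge m v u"
      using Gadj_iff_path_adj[OF G] by (simp add: path_adj_def)
    then show "\<exists>e<2 * (t * m). (u = match_vtx m t e 1 \<and> v = match_vtx m t e 2)
        \<or> (u = match_vtx m t e 2 \<and> v = match_vtx m t e 1)"
      using path_edge_matching_verts[OF m u v] path_edge_matching_verts[OF m v u] by blast
  next
    assume "\<exists>e<2 * (t * m). (u = match_vtx m t e 1 \<and> v = match_vtx m t e 2)
        \<or> (u = match_vtx m t e 2 \<and> v = match_vtx m t e 1)"
    then have "path_edge m u v \<or> path_edge m v u"
      using edge by blast
    then show "Gadj (3 * m + 1) t u v"
      using Gadj_iff_path_adj[OF G] by (simp add: path_adj_def)
  qed
qed

lemma matching_verts_homeomorphic_nsphere:
  assumes m: "m \<ge> 1" and t: "t \<ge> 1"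
  shows "indep_space (matching_verts m t) (Gadj (3 * m + 1) t) homeomorphic_space nsphere (2 * t * m - 1)"
proof -
  let ?p = "2 * t * m - 1"
  have "Suc ?p = 2 * (t * m)"
    using m t by (simp add: mult_ac)
  then have idx: "{..?p} = {..<2 * (t * m)}" and idx': "e \<le> ?p \<longleftrightarrow> e < 2 * (t * m)" for e
    using lessThan_Suc_atMost[of ?p] by auto
  have inj: "inj_on (\<lambda>e. match_vtx m t e d) {..<2 * (t * m)}" if "d \<in> {1, 2}" for d
    using match_vtx_inj[OF m _ _ that that] by (auto intro: inj_onI)
  have "perfect_matching (matching_verts m t) (Gadj (3 * m + 1) t)
      (\<lambda>e. match_vtx m t e 1) (\<lambda>e. match_vtx m t e 2) ?p"
    unfolding perfect_matching_def idx idx'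
    using matching_verts_eq[OF m] inj match_vtx_inj[OF m, of _ t _ 1 2] Gadj_matching_verts_iff[OF m]
    by auto
  then have "indep_space (matching_verts m t) (Gadj (3 * m + 1) t) homeomorphic_space l1_sphere ?p"
    by (rule perfect_matching.indep_space_homeomorphic_l1_sphere)
  then show ?thesis
    using l1_sphere_homeomorphic_nsphere homeomorphic_space_trans by blast
qed

theorem lemma3p2:
  fixes m t n :: nat
  assumes "m \<ge> 1" and "n = 3 * m + 1" and "t \<ge> 1"
  shows "(geom_realization
              (indep_complex (Gverts n t - closed_nbhd (Gverts n t) (Gadj n t) (A t)) (Gadj n t)))
           homotopy_equivalent_space (nsphere (2 * t * m - 1))"
proof -
  have "t * m - 1 < t * m"
    using assms(1,3) by simp
  then have "indep_space (X_verts m t) (Gadj n t)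
      homotopy_equivalent_space indep_space (fold_stage m t (t * m - 1)) (Gadj n t)"
    using X_verts_homotopy_equivalent_fold_stage[OF assms(1)] assms(2) by simp
  also have "\<dots> homotopy_equivalent_space indep_space (matching_verts m t) (Gadj n t)"
    using fold_stage_last_homotopy_equivalent[OF assms(1,3)] assms(2) by simp
  also have "\<dots> homotopy_equivalent_space nsphere (2 * t * m - 1)"
    using matching_verts_homeomorphic_nsphere[OF assms(1,3)] assms(2)
    by (simp add: homeomorphic_imp_homotopy_equivalent_space)
  finally show ?thesis
    by (simp add: X_verts_def assms(2))
qed

end
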